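(* Let $N_R\ge1$ and $N_s\ge2$ be integers and $\gamma>0$. Let $\Omega$ be an angular interval, $p$ a probability density on $\Omega$, and $\eta:\Omega\to(0,\infty)$ a measurable function (not depending on $L$). For each positive integer $L$ and $\phi\in\Omega$ let $p_{miss}(\phi)=\Pr\{X_{L,\phi}\le(N_s-1)\gamma\}$ where $X_{L,\phi}\sim\mathcal{F}(2N_RL,\,2N_RL(N_s-1),\,L\eta(\phi))$, and let $\bar p_{miss}=\int_\Omega p_{miss}(\phi)p(\phi)\,d\phi$. If there exist $\Omega^-\subset\Omega$ and $\eta^->0$ such that $\eta(\phi)\le\eta^-$ for all $\phi\in\Omega^-$ and $\int_{\Omega^-}p(\phi)\,d\phi>0$, then $$\lim_{L\to\infty}-\frac1L\log\bar p_{miss}\le I^*(\eta^-,\gamma)\qquad\text{if }\gamma<\frac{2N_R+\eta^-}{2N_R(N_s-1)},$$ where for $\eta>0$, $$I^*(\eta,\gamma)=\frac{\eta}{2}\left(1-\frac{\gamma v^*}{N_R+\sqrt{N_R^2+\gamma\eta v^*}}\right)+N_R(N_s-1)\log\frac{2N_R(N_s-1)}{v^*}-N_R\log\frac{\gamma v^*}{N_R+\sqrt{N_R^2+\gamma\eta v^*}},$$ with $v^*=\frac{x^{*2}-N_R^2}{\eta\gamma}$ and $x^*>0$ a solution of $\frac{\gamma+1}{\eta\gamma}(x^2-N_R^2)-x-N_R-2N_R(N_s-1)=0$.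
   Context: $\mathcal{F}(n_1,n_2,\lambda)$ denotes the noncentral F-distribution with degrees of freedom $n_1,n_2$ and noncentrality $\lambda$, i.e. the law of $(X_1/n_1)/(X_2/n_2)$ with $X_1$ noncentral chi-square ($n_1$ degrees of freedom, noncentrality $\lambda$) and $X_2$ an independent central chi-square with $n_2$ degrees of freedom. In the application, $\eta(\phi)$ is the normalised noncentrality parameter (proportional to the average transmit beamforming gain in direction $\phi$ divided by the path loss) of a user in direction $\phi$, $p_{miss}(\phi)$ is its miss-detection probability for the GLRT statistic with threshold $\gamma$, and $\bar p_{miss}$ is the average miss-detection probability over user directions. *)

theory Defs
  imports "HOL-Probability.Probability"
begin

definition chi2_density :: "nat \<Rightarrow> real \<Rightarrow> real" where
  "chi2_density k x =
     (if x > 0 then x powr (real k / 2 - 1) * exp (- x / 2) /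
                    (2 powr (real k / 2) * Gamma (real k / 2))
      else 0)"

text \<open>Density of the noncentral chi-square distribution with k degrees of freedom and
  noncentrality lam (lam = sum of squared means), as the standard Poisson(lam/2) mixture
  of central chi-square densities.\<close>
definition ncchi2_density :: "nat \<Rightarrow> real \<Rightarrow> real \<Rightarrow> real" where
  "ncchi2_density k lam x =
     (\<Sum>j. exp (- lam / 2) * (lam / 2) ^ j / fact j * chi2_density (k + 2 * j) x)"

definition ncF :: "nat \<Rightarrow> nat \<Rightarrow> real \<Rightarrow> real measure" where
  "ncF n1 n2 lam =
     distr (density (lborel \<Otimes>\<^sub>M lborel)
              (\<lambda>(x1, x2). ennreal (ncchi2_density n1 lam x1 * chi2_density n2 x2)))
           lborel (\<lambda>(x1, x2). (x1 / real n1) / (x2 / real n2))"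

definition p_miss :: "nat \<Rightarrow> nat \<Rightarrow> real \<Rightarrow> nat \<Rightarrow> real \<Rightarrow> real" where
  "p_miss NR Ns \<gamma> L eta =
     measure (ncF (2 * NR * L) (2 * NR * L * (Ns - 1)) (real L * eta)) {.. real (Ns - 1) * \<gamma>}"

definition p_miss_avg ::
  "nat \<Rightarrow> nat \<Rightarrow> real \<Rightarrow> nat \<Rightarrow> real set \<Rightarrow> (real \<Rightarrow> real) \<Rightarrow> (real \<Rightarrow> real) \<Rightarrow> real" where
  "p_miss_avg NR Ns \<gamma> L \<Omega> p \<eta> =
     enn2real (\<integral>\<^sup>+ \<phi>. ennreal (p_miss NR Ns \<gamma> L (\<eta> \<phi>) * p \<phi>) * indicator \<Omega> \<phi> \<partial>lborel)"

text \<open>The rate function I*(eta, gamma), given the solution x* of the quadratic.\<close>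
definition I_star :: "nat \<Rightarrow> nat \<Rightarrow> real \<Rightarrow> real \<Rightarrow> real \<Rightarrow> real" where
  "I_star NR Ns \<eta> \<gamma> xs =
     (let v = (xs^2 - real NR ^ 2) / (\<eta> * \<gamma>);
          q = \<gamma> * v / (real NR + sqrt (real NR ^ 2 + \<gamma> * \<eta> * v))
      in \<eta> / 2 * (1 - q)
         + real NR * real (Ns - 1) * ln (2 * real NR * real (Ns - 1) / v)
         - real NR * ln q)"

end

theory Submission
  imports Defs
begin

text \<open>
  It suffices to bound the miss probability of a single user from below. The numerator of the
  F ratio is a Poisson mixture of central chi-square variables, so the ratio stays below the
  threshold with at least the probability of one Poisson index j \<approx> \<beta>L together with a unit
  box for the numerator near 2\<mu>L and for the denominator near vL. By Stirling's bound for j!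
  and the identity between chi-square densities of even degree and Poisson weights, each of the
  three factors decays like exp (-L D) with D a Poisson relative entropy, and for the
  optimal \<beta> = (x* - N_R)/2, \<mu> = \<gamma>v*/2 the three entropies add up to I*(\<eta>-, \<gamma>).
  Averaging over directions costs only a constant factor, namely the probability of the
  directions in \<Omega>- whose \<eta> lies in a short interval [a, b]; the width of that interval enters
  the exponent as (b - a)/2 and can be made arbitrarily small.
\<close>

section \<open>Poisson weights and Stirling's bound\<close>

definition poisson_weight :: "real \<Rightarrow> nat \<Rightarrow> real" where
  "poisson_weight \<mu> n = exp (- \<mu>) * \<mu> ^ n / fact n"

lemma poisson_weight_nonneg: "0 \<le> \<mu> \<Longrightarrow> 0 \<le> poisson_weight \<mu> n"
  by (simp add: poisson_weight_def)

lemma poisson_weight_sums: "poisson_weight \<mu> sums 1"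
proof -
  have "(\<lambda>n. exp (- \<mu>) * (\<mu> ^ n /\<^sub>R fact n)) sums (exp (- \<mu>) * exp \<mu>)"
    by (intro sums_mult exp_converges)
  then show ?thesis
    unfolding poisson_weight_def[abs_def] by (simp add: field_simps flip: exp_add)
qed

lemma poisson_weight_le_1: "0 \<le> \<mu> \<Longrightarrow> poisson_weight \<mu> n \<le> 1"
  using sum_le_suminf[OF sums_summable[OF poisson_weight_sums], of "{n}"]
    poisson_weight_nonneg sums_unique[OF poisson_weight_sums] by auto

lemma poisson_weight_ge_interval:
  assumes "0 \<le> a" "a \<le> \<mu>" "\<mu> \<le> b"
  shows "exp (- (b - a)) * poisson_weight a j \<le> poisson_weight \<mu> j"
proof -
  have "exp (- (b - a)) * poisson_weight a j = exp (- b) * a ^ j / fact j"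
    by (simp add: poisson_weight_def mult_exp_exp)
  also have "\<dots> \<le> exp (- \<mu>) * \<mu> ^ j / fact j"
    using assms by (intro divide_right_mono mult_mono power_mono) simp_all
  finally show ?thesis
    by (simp add: poisson_weight_def)
qed

lemma ln_fact_le: "ln (fact n) \<le> real n * ln (real n) - real n + ln (real n) + 1"
proof (induction n)
  case 0
  then show ?case by simp
next
  case (Suc n)
  show ?case
  proof (cases "n = 0")
    case True
    then show ?thesis by simp
  next
    case False
    then have n: "real n \<ge> 1"
      by simp
    have "ln (real n / (real n + 1)) \<le> real n / (real n + 1) - 1"
      using n by (intro ln_le_minus_one) auto
    then have step: "1 \<le> (real n + 1) * (ln (real n + 1) - ln (real n))"
      using n by (simp add: ln_div field_simps)
    have "ln (fact (Suc n)) = ln (fact n) + ln (real n + 1)"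
      by (simp add: ln_mult add.commute)
    also have "\<dots> \<le> real (Suc n) * ln (real (Suc n)) - real (Suc n) + ln (real (Suc n)) + 1"
      using Suc.IH step by (simp add: algebra_simps)
    finally show ?thesis .
  qed
qed

text \<open>At n = 0 this is -1 - \<mu>, because ln 0 = 0.\<close>

definition poisson_ln_lower :: "nat \<Rightarrow> real \<Rightarrow> real" where
  "poisson_ln_lower n \<mu> = real n * ln (\<mu> / real n) + real n - ln (real n) - 1 - \<mu>"

lemma exp_poisson_ln_lower_le:
  assumes "0 < \<mu> \<or> n = 0"
  shows "exp (poisson_ln_lower n \<mu>) \<le> poisson_weight \<mu> n"
proof (cases "n = 0")
  case True
  then show ?thesis
    by (simp add: poisson_ln_lower_def poisson_weight_def)
next
  case False
  with assms have \<mu>: "0 < \<mu>"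
    by simp
  have "poisson_ln_lower n \<mu> \<le> - \<mu> + real n * ln \<mu> - ln (fact n)"
    using ln_fact_le[of n] \<mu> False by (simp add: poisson_ln_lower_def ln_div algebra_simps)
  also have "\<dots> = ln (poisson_weight \<mu> n)"
    using \<mu> by (simp add: poisson_weight_def ln_mult ln_div ln_realpow)
  finally show ?thesis
    using \<mu> by (simp add: poisson_weight_def ln_ge_iff)
qed

section \<open>Chi-square and noncentral chi-square densities\<close>

lemma chi2_density_nonneg: "0 \<le> chi2_density k x"
proof -
  have "0 \<le> Gamma (real k / 2)"
    by (cases "k = 0") (simp_all add: Gamma_real_pos less_imp_le)
  then show ?thesis
    by (simp add: chi2_density_def)
qed

lemma chi2_density_nonpos [simp]: "x \<le> 0 \<Longrightarrow> chi2_density k x = 0"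
  by (simp add: chi2_density_def)

lemma borel_measurable_chi2_density [measurable]: "chi2_density k \<in> borel_measurable borel"
  unfolding chi2_density_def[abs_def] by measurable

lemma chi2_density_even:
  assumes "0 < x"
  shows "chi2_density (2 * Suc n) x = poisson_weight (x / 2) n / 2"
proof -
  have k: "real (2 * Suc n) / 2 = 1 + real n"
    by simp
  have "Gamma (1 + real n) = fact n" "(2::real) powr (1 + real n) = 2 * 2 ^ n"
    "x powr real n = x ^ n"
    using assms by (simp_all add: Gamma_fact powr_realpow powr_add)
  then show ?thesis
    using assms unfolding chi2_density_def k
    by (simp add: poisson_weight_def power_divide field_simps)
qed

lemma chi2_density_even_le: "chi2_density (2 * Suc n) x \<le> 1 / 2"
  using chi2_density_even[of x n] poisson_weight_le_1[of "x / 2" n] by (cases "0 < x") simp_all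

lemma chi2_density_even_ge:
  assumes "0 < X" "X \<le> x" "x \<le> X + 1"
  shows "exp (poisson_ln_lower n (X / 2) - 1 / 2) / 2 \<le> chi2_density (2 * Suc n) x"
proof -
  have "exp (poisson_ln_lower n (X / 2) - 1 / 2) = exp (- 1 / 2) * exp (poisson_ln_lower n (X / 2))"
    by (simp flip: exp_add)
  also have "\<dots> \<le> exp (- 1 / 2) * poisson_weight (X / 2) n"
    using exp_poisson_ln_lower_le[of "X / 2" n] assms(1) by simp
  also have "\<dots> = exp (- (X + 1) / 2) * (X / 2) ^ n / fact n"
    by (simp add: poisson_weight_def field_simps flip: exp_add)
  also have "\<dots> \<le> exp (- x / 2) * (x / 2) ^ n / fact n"
    using assms by (intro divide_right_mono mult_mono power_mono) simp_all
  also have "\<dots> = 2 * chi2_density (2 * Suc n) x"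
    using assms chi2_density_even[of x n] by (simp add: poisson_weight_def)
  finally show ?thesis
    by simp
qed

lemma chi2_density_even_le_erlang: "chi2_density (2 * Suc n) x \<le> erlang_density n (1 / 2) x"
  using chi2_density_even[of x n]
  by (cases "0 < x") (simp_all add: poisson_weight_def erlang_density_def power_divide field_simps)

lemma nn_integral_chi2_density_even_le: "(\<integral>\<^sup>+x. chi2_density (2 * Suc n) x \<partial>lborel) \<le> 1"
proof -
  have "(\<integral>\<^sup>+x. chi2_density (2 * Suc n) x \<partial>lborel) \<le> (\<integral>\<^sup>+x. erlang_density n (1 / 2) x \<partial>lborel)"
    by (intro nn_integral_mono ennreal_leI chi2_density_even_le_erlang)
  also have "\<dots> = 1"
    using nn_integral_erlang_ith_moment[of "1/2" n 0] by simp
  finally show ?thesis .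
qed

lemma borel_measurable_ncchi2_density [measurable]: "ncchi2_density k lam \<in> borel_measurable borel"
  unfolding ncchi2_density_def[abs_def] by measurable

lemma ncchi2_density_eq:
  "ncchi2_density k lam x = (\<Sum>j. poisson_weight (lam / 2) j * chi2_density (k + 2 * j) x)"
  by (simp add: ncchi2_density_def poisson_weight_def)

lemma summable_ncchi2_terms:
  assumes "0 \<le> lam"
  shows "summable (\<lambda>j. poisson_weight (lam / 2) j * chi2_density (2 * Suc m + 2 * j) x)"
proof (rule summable_comparison_test'[OF sums_summable[OF poisson_weight_sums]])
  fix j
  have "chi2_density (2 * Suc (m + j)) x \<le> 1"
    using chi2_density_even_le[of "m + j" x] by simp
  then show "norm (poisson_weight (lam / 2) j * chi2_density (2 * Suc m + 2 * j) x)
      \<le> poisson_weight (lam / 2) j"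
    using assms poisson_weight_nonneg[of "lam / 2" j] chi2_density_nonneg
    by (simp add: mult_left_le)
qed

lemma ncchi2_density_nonneg: "0 \<le> lam \<Longrightarrow> 0 \<le> ncchi2_density (2 * Suc m) lam x"
  unfolding ncchi2_density_eq
  by (intro suminf_nonneg summable_ncchi2_terms mult_nonneg_nonneg poisson_weight_nonneg
      chi2_density_nonneg) simp_all

lemma ncchi2_term_le_density:
  assumes "0 \<le> lam"
  shows "poisson_weight (lam / 2) j * chi2_density (2 * Suc m + 2 * j) x \<le> ncchi2_density (2 * Suc m) lam x"
  unfolding ncchi2_density_eq
  using sum_le_suminf[OF summable_ncchi2_terms[OF assms], of "{j}"] assms
  by (simp add: mult_nonneg_nonneg poisson_weight_nonneg chi2_density_nonneg)

lemma nn_integral_ncchi2_density_le: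
  assumes "0 \<le> lam"
  shows "(\<integral>\<^sup>+x. ncchi2_density (2 * Suc m) lam x \<partial>lborel) \<le> 1"
proof -
  let ?w = "poisson_weight (lam / 2)"
  have "(\<integral>\<^sup>+x. ncchi2_density (2 * Suc m) lam x \<partial>lborel)
      = (\<integral>\<^sup>+x. (\<Sum>j. ennreal (?w j * chi2_density (2 * Suc (m + j)) x)) \<partial>lborel)"
    using summable_ncchi2_terms[OF assms] assms
    by (intro nn_integral_cong)
       (simp add: ncchi2_density_eq suminf_ennreal2 mult_nonneg_nonneg poisson_weight_nonneg
        chi2_density_nonneg)
  also have "\<dots> = (\<Sum>j. ennreal (?w j) * (\<integral>\<^sup>+x. chi2_density (2 * Suc (m + j)) x \<partial>lborel))"
    using assms
    by (simp add: nn_integral_suminf nn_integral_cmult ennreal_mult poisson_weight_nonneg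
        chi2_density_nonneg)
  also have "\<dots> \<le> (\<Sum>j. ennreal (?w j))"
    using mult_left_mono[OF nn_integral_chi2_density_even_le, of "ennreal (?w j)" "m + j" for j]
    by (intro suminf_le summableI) simp_all
  also have "\<dots> = 1"
    using poisson_weight_sums[of "lam / 2"] assms
    by (simp add: suminf_ennreal2 sums_summable sums_unique[symmetric] poisson_weight_nonneg)
  finally show ?thesis .
qed

section \<open>The noncentral F distribution and the miss probability\<close>

lemma emeasure_ncF:
  assumes "A \<in> sets borel"
  shows "emeasure (ncF n1 n2 lam) A =
    (\<integral>\<^sup>+(x1, x2). ennreal (ncchi2_density n1 lam x1 * chi2_density n2 x2) *
        indicator A ((x1 / real n1) / (x2 / real n2)) \<partial>(lborel \<Otimes>\<^sub>M lborel))"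
proof -
  let ?D = "density (lborel \<Otimes>\<^sub>M lborel)
    (\<lambda>(x1, x2). ennreal (ncchi2_density n1 lam x1 * chi2_density n2 x2))"
  let ?g = "\<lambda>(x1::real, x2::real). (x1 / real n1) / (x2 / real n2)"
  have "?g \<in> ?D \<rightarrow>\<^sub>M lborel" "A \<in> sets lborel"
    using assms by simp_all
  then have "emeasure (ncF n1 n2 lam) A = emeasure ?D (?g -` A \<inter> space ?D)"
    unfolding ncF_def by (rule emeasure_distr)
  also have "\<dots> = emeasure ?D (?g -` A \<inter> space (lborel \<Otimes>\<^sub>M lborel))"
    by simp
  also have "\<dots> = (\<integral>\<^sup>+z. (\<lambda>(x1, x2). ennreal (ncchi2_density n1 lam x1 * chi2_density n2 x2)) z *
      indicator (?g -` A \<inter> space (lborel \<Otimes>\<^sub>M lborel)) z \<partial>(lborel \<Otimes>\<^sub>M lborel))"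
    using assms[measurable] by (intro emeasure_density) measurable
  finally show ?thesis
    by (simp add: space_pair_measure indicator_def case_prod_beta')
qed

lemma emeasure_ncF_le_1:
  assumes "0 \<le> lam"
  shows "emeasure (ncF (2 * Suc m1) (2 * Suc m2) lam) A \<le> 1"
proof -
  define k1 k2 where "k1 = 2 * Suc m1" and "k2 = 2 * Suc m2"
  let ?M = "ncF k1 k2 lam"
  have f1: "(\<integral>\<^sup>+x. ncchi2_density k1 lam x \<partial>lborel) \<le> 1" and "0 \<le> ncchi2_density k1 lam x"
    and f2: "(\<integral>\<^sup>+x. chi2_density k2 x \<partial>lborel) \<le> 1" and "0 \<le> chi2_density k2 y" for x y
    unfolding k1_def k2_def using assms
    by (simp_all only: nn_integral_ncchi2_density_le ncchi2_density_nonneg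
        nn_integral_chi2_density_even_le chi2_density_nonneg)
  then have split: "ennreal (ncchi2_density k1 lam x * chi2_density k2 y) =
      ennreal (ncchi2_density k1 lam x) * ennreal (chi2_density k2 y)" for x y
    by (simp add: ennreal_mult)
  have "emeasure ?M A \<le> emeasure ?M UNIV"
    using emeasure_space[of ?M A] by (simp add: ncF_def)
  also have "\<dots> = (\<integral>\<^sup>+x1. \<integral>\<^sup>+x2. ennreal (ncchi2_density k1 lam x1) *
        ennreal (chi2_density k2 x2) \<partial>lborel \<partial>lborel)"
    by (simp add: emeasure_ncF lborel.nn_integral_fst[symmetric] split)
  also have "\<dots> = (\<integral>\<^sup>+x1. ncchi2_density k1 lam x1 \<partial>lborel) * (\<integral>\<^sup>+x2. chi2_density k2 x2 \<partial>lborel)"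
    by (simp add: nn_integral_cmult nn_integral_multc)
  also have "\<dots> \<le> 1 * 1"
    by (intro mult_mono f1 f2) simp_all
  finally show ?thesis
    by (simp add: k1_def k2_def)
qed

lemma measure_ncF_atMost_ge_box:
  fixes X Y t c1 c2 :: real
  assumes "0 \<le> lam" "0 \<le> c1" "0 \<le> c2"
    and box: "\<And>x y. x \<in> {X..X+1} \<Longrightarrow> y \<in> {Y..Y+1} \<Longrightarrow>
      (x / real (2 * Suc m1)) / (y / real (2 * Suc m2)) \<le> t"
    and c1: "\<And>x. x \<in> {X..X+1} \<Longrightarrow> c1 \<le> chi2_density (2 * Suc m1 + 2 * j) x"
    and c2: "\<And>y. y \<in> {Y..Y+1} \<Longrightarrow> c2 \<le> chi2_density (2 * Suc m2) y"
  shows "poisson_weight (lam / 2) j * c1 * c2 \<le> measure (ncF (2 * Suc m1) (2 * Suc m2) lam) {..t}"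
proof -
  define k1 k2 where "k1 = 2 * Suc m1" and "k2 = 2 * Suc m2"
  let ?c = "poisson_weight (lam / 2) j * c1 * c2"
  let ?B = "{X..X+1} \<times> {Y..Y+1}"
  have c: "0 \<le> ?c"
    using assms(1-3) by (simp add: poisson_weight_nonneg)
  have density_ge: "?c \<le> ncchi2_density k1 lam x * chi2_density k2 y"
    if "x \<in> {X..X+1}" "y \<in> {Y..Y+1}" for x y
  proof -
    have "poisson_weight (lam / 2) j * c1 \<le> poisson_weight (lam / 2) j * chi2_density (k1 + 2 * j) x"
      using c1[OF that(1)] assms(1) by (simp add: k1_def mult_left_mono poisson_weight_nonneg)
    also have "\<dots> \<le> ncchi2_density k1 lam x"
      unfolding k1_def by (rule ncchi2_term_le_density[OF assms(1)])
    finally show ?thesis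
      using c2[OF that(2)] assms(1,3) unfolding k1_def k2_def
      by (intro mult_mono ncchi2_density_nonneg) simp_all
  qed
  have "ennreal ?c = (\<integral>\<^sup>+z. ennreal ?c * indicator ?B z \<partial>(lborel \<Otimes>\<^sub>M lborel))"
    by (simp add: nn_integral_cmult_indicator lborel.emeasure_pair_measure_Times)
  also have "\<dots> \<le> emeasure (ncF k1 k2 lam) {..t}"
    unfolding emeasure_ncF[OF atMost_borel]
    using density_ge box unfolding k1_def k2_def
    by (intro nn_integral_mono) (auto simp: ennreal_leI split: split_indicator)
  finally have "enn2real (ennreal ?c) \<le> measure (ncF k1 k2 lam) {..t}"
    unfolding measure_def k1_def k2_def
    using emeasure_ncF_le_1[OF assms(1), of m1 m2 "{..t}"]
    by (intro enn2real_mono) (simp_all add: le_less_trans[OF _ ennreal_one_less_top])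
  then show ?thesis
    using c by (simp add: k1_def k2_def)
qed

lemma p_miss_le_1:
  assumes "1 \<le> NR" "2 \<le> Ns" "1 \<le> L" "0 \<le> \<eta>"
  shows "p_miss NR Ns \<gamma> L \<eta> \<le> 1"
proof -
  define m1 m2 where "m1 = NR * L - 1" and "m2 = NR * L * (Ns - 1) - 1"
  have "1 \<le> NR * L" "1 \<le> NR * L * (Ns - 1)"
    using assms by simp_all
  then have k1: "2 * NR * L = 2 * Suc m1" and k2: "2 * NR * L * (Ns - 1) = 2 * Suc m2"
    by (simp_all add: m1_def m2_def)
  have "emeasure (ncF (2 * Suc m1) (2 * Suc m2) (real L * \<eta>)) {..real (Ns - 1) * \<gamma>} \<le> 1"
    using emeasure_ncF_le_1 assms(4) by simp
  then show ?thesis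
    unfolding p_miss_def measure_def k2 unfolding k1 by (simp add: enn2real_leI)
qed

lemma ratio_le_of_box:
  fixes x y X Y \<gamma> d c :: real
  assumes "0 < d" "0 < c" "0 < X" "0 < Y" "X + 1 \<le> \<gamma> * Y" "x \<le> X + 1" "Y \<le> y"
  shows "(x / d) / (y / (d * c)) \<le> c * \<gamma>"
proof -
  have "0 < \<gamma> * Y"
    using assms(3,5) by linarith
  then have "0 < \<gamma>"
    using assms(4) by (simp add: zero_less_mult_iff)
  then have "x \<le> \<gamma> * y"
    using assms(5,6) mult_left_mono[OF assms(7), of \<gamma>] by linarith
  moreover have "(x / d) / (y / (d * c)) = x * c / y"
    using assms(1,2,4,7) by (simp add: field_simps)
  ultimately show ?thesis
    using assms(2,4,7) by (simp add: divide_le_eq mult.commute mult_left_mono)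
qed

lemma p_miss_ge_box:
  fixes X Y :: real
  assumes NR: "1 \<le> NR" and Ns: "2 \<le> Ns" and L: "1 \<le> L" and "0 \<le> \<eta>"
    and XY: "0 < X" "0 < Y" "X + 1 \<le> \<gamma> * Y"
  shows "poisson_weight (real L * \<eta> / 2) j
      * (exp (poisson_ln_lower (NR * L + j - 1) (X / 2) - 1 / 2) / 2)
      * (exp (poisson_ln_lower (NR * L * (Ns - 1) - 1) (Y / 2) - 1 / 2) / 2)
    \<le> p_miss NR Ns \<gamma> L \<eta>"
proof -
  define m1 m2 where "m1 = NR * L - 1" and "m2 = NR * L * (Ns - 1) - 1"
  have "1 \<le> NR * L" "1 \<le> NR * L * (Ns - 1)"
    using NR Ns L by simp_all
  then have k1: "2 * NR * L = 2 * Suc m1" and k2: "2 * NR * L * (Ns - 1) = 2 * Suc m2"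
    and j: "2 * Suc m1 + 2 * j = 2 * Suc (NR * L + j - 1)"
    by (simp_all add: m1_def m2_def)
  have "poisson_weight (real L * \<eta> / 2) j
      * (exp (poisson_ln_lower (NR * L + j - 1) (X / 2) - 1 / 2) / 2)
      * (exp (poisson_ln_lower m2 (Y / 2) - 1 / 2) / 2)
    \<le> measure (ncF (2 * Suc m1) (2 * Suc m2) (real L * \<eta>)) {..real (Ns - 1) * \<gamma>}"
  proof (rule measure_ncF_atMost_ge_box)
    fix x y
    assume "x \<in> {X..X+1}" "y \<in> {Y..Y+1}"
    moreover have k: "real (2 * Suc m2) = real (2 * Suc m1) * real (Ns - 1)"
      unfolding k1[symmetric] k2[symmetric] by simp
    ultimately show "(x / real (2 * Suc m1)) / (y / real (2 * Suc m2)) \<le> real (Ns - 1) * \<gamma>"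
      unfolding k using XY Ns by (intro ratio_le_of_box) auto
  next
    fix x
    assume "x \<in> {X..X+1}"
    then show "exp (poisson_ln_lower (NR * L + j - 1) (X / 2) - 1 / 2) / 2 \<le> chi2_density (2 * Suc m1 + 2 * j) x"
      unfolding j using XY by (intro chi2_density_even_ge) simp_all
  next
    fix y
    assume "y \<in> {Y..Y+1}"
    then show "exp (poisson_ln_lower m2 (Y / 2) - 1 / 2) / 2 \<le> chi2_density (2 * Suc m2) y"
      using XY by (intro chi2_density_even_ge) simp_all
  qed (use assms in simp_all)
  then show ?thesis
    unfolding p_miss_def k2 unfolding k1 by (simp only: m2_def)
qed

section \<open>Relative entropy of Poisson laws\<close>

lemma mult_ln_div_le:
  fixes m \<mu> :: real
  assumes "0 < m" "0 < \<mu>"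
  shows "m * ln (\<mu> / m) \<le> \<mu> - m"
proof -
  have "m * ln (\<mu> / m) \<le> m * (\<mu> / m - 1)"
    using assms by (intro mult_left_mono ln_le_minus_one) simp_all
  also have "\<dots> = \<mu> - m"
    using assms by (simp add: field_simps)
  finally show ?thesis .
qed

definition poisson_kl :: "real \<Rightarrow> real \<Rightarrow> real" where
  "poisson_kl m \<mu> = m * ln (m / \<mu>) - m + \<mu>"

lemma poisson_kl_self [simp]: "poisson_kl m m = 0"
  by (cases "m = 0") (simp_all add: poisson_kl_def)

lemma poisson_kl_nonneg:
  assumes "0 \<le> m" "0 < \<mu>"
  shows "0 \<le> poisson_kl m \<mu>"
proof (cases "m = 0")
  case False
  then show ?thesis
    using assms mult_ln_div_le[of m \<mu>] by (simp add: poisson_kl_def ln_div algebra_simps)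
qed (use assms in \<open>simp add: poisson_kl_def\<close>)

lemma poisson_kl_mono_right:
  assumes "0 \<le> m" "m \<le> \<mu>1" "\<mu>1 \<le> \<mu>2"
  shows "poisson_kl m \<mu>1 \<le> poisson_kl m \<mu>2"
proof (cases "m = 0")
  case False
  then have pos: "0 < m" "0 < \<mu>1"
    using assms by simp_all
  have "m * ln (\<mu>2 / \<mu>1) \<le> m * (\<mu>2 / \<mu>1 - 1)"
    using pos assms by (intro mult_left_mono ln_le_minus_one) simp_all
  also have "\<dots> = (m / \<mu>1) * (\<mu>2 - \<mu>1)"
    using pos by (simp add: field_simps)
  also have "\<dots> \<le> \<mu>2 - \<mu>1"
    using pos assms by (intro mult_left_le_one_le) simp_all
  finally show ?thesis
    using pos assms by (simp add: poisson_kl_def ln_div algebra_simps)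
qed (use assms in \<open>simp add: poisson_kl_def\<close>)

lemma poisson_kl_mono_left:
  assumes "0 < \<mu>" "\<mu> \<le> m1" "m1 \<le> m2"
  shows "poisson_kl m1 \<mu> \<le> poisson_kl m2 \<mu>"
proof -
  have pos: "0 < m1" "0 < m2"
    using assms by simp_all
  have "m2 * ln (m1 / m2) \<le> m1 - m2"
    using mult_ln_div_le[OF pos(2,1)] .
  moreover have "0 \<le> (m2 - m1) * ln (m1 / \<mu>)"
    using assms by simp
  ultimately show ?thesis
    using pos assms by (simp add: poisson_kl_def ln_div algebra_simps)
qed

lemma poisson_kl_min_left_le:
  assumes "0 \<le> m" "0 \<le> \<mu>" "\<mu> \<le> \<mu>'" "0 < \<mu>'"
  shows "poisson_kl (min m \<mu>) \<mu> \<le> poisson_kl m \<mu>'"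
  using assms poisson_kl_mono_right[of m \<mu> \<mu>'] poisson_kl_nonneg[of m \<mu>']
  by (cases "m \<le> \<mu>") (simp_all add: min_def)

lemma poisson_kl_min_right_le:
  assumes "0 < \<mu>" "0 \<le> m" "m \<le> m'"
  shows "poisson_kl m (min \<mu> m) \<le> poisson_kl m' \<mu>"
  using assms poisson_kl_mono_left[of \<mu> m m'] poisson_kl_nonneg[of m' \<mu>]
  by (cases "\<mu> \<le> m") (simp_all add: min_def)

section \<open>Exponential rates\<close>

lemma tendsto_ln_div_real:
  fixes f :: "nat \<Rightarrow> real"
  assumes lim: "(\<lambda>L. f L / real L) \<longlonglongrightarrow> c" and c: "0 < c"
  shows "(\<lambda>L. ln (f L) / real L) \<longlonglongrightarrow> 0"
proof -
  have "(\<lambda>L. ln (f L / real L) * (1 / real L) + ln (real L) / real L) \<longlonglongrightarrow> ln c * 0 + 0"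
    by (intro tendsto_intros lim lim_1_over_n lim_ln_over_n) (use c in auto)
  moreover have "\<forall>\<^sub>F L in sequentially. ln (f L / real L) * (1 / real L) + ln (real L) / real L = ln (f L) / real L"
    using order_tendstoD(1)[OF lim c] eventually_gt_at_top[of 0]
  proof eventually_elim
    case (elim L)
    then have "0 < f L"
      by (simp add: zero_less_divide_iff)
    with elim show ?case
      by (simp add: ln_div field_simps)
  qed
  ultimately show ?thesis
    by (simp add: Lim_transform_eventually)
qed

lemma tendsto_nat_floor_mult_div:
  assumes "0 \<le> \<beta>"
  shows "(\<lambda>L. real (nat \<lfloor>\<beta> * real L\<rfloor>) / real L) \<longlonglongrightarrow> \<beta>"
proof (rule tendsto_sandwich)
  show "(\<lambda>L. \<beta> - 1 / real L) \<longlonglongrightarrow> \<beta>"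
    using tendsto_diff[OF tendsto_const lim_1_over_n, of \<beta>] by simp
  have nat_floor: "real (nat \<lfloor>\<beta> * real L\<rfloor>) = of_int \<lfloor>\<beta> * real L\<rfloor>" for L
    using assms by simp
  have "\<beta> * real L - 1 \<le> real (nat \<lfloor>\<beta> * real L\<rfloor>)" "real (nat \<lfloor>\<beta> * real L\<rfloor>) \<le> \<beta> * real L" for L
    using nat_floor[of L] of_int_floor_le[of "\<beta> * real L"] real_of_int_floor_add_one_ge[of "\<beta> * real L"]
    by linarith+
  then have "(\<beta> * real L - 1) / real L \<le> real (nat \<lfloor>\<beta> * real L\<rfloor>) / real L"
    "real (nat \<lfloor>\<beta> * real L\<rfloor>) / real L \<le> \<beta> * real L / real L" for L
    by (meson divide_right_mono of_nat_0_le_iff)+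
  moreover have "(\<beta> * real L - 1) / real L = \<beta> - 1 / real L" "\<beta> * real L / real L = \<beta>" if "0 < L" for L
    using that by (simp_all add: diff_divide_distrib)
  ultimately have "\<beta> - 1 / real L \<le> real (nat \<lfloor>\<beta> * real L\<rfloor>) / real L"
    "real (nat \<lfloor>\<beta> * real L\<rfloor>) / real L \<le> \<beta>" if "0 < L" for L
    using that by metis+
  then show "\<forall>\<^sub>F L in sequentially. \<beta> - 1 / real L \<le> real (nat \<lfloor>\<beta> * real L\<rfloor>) / real L"
    "\<forall>\<^sub>F L in sequentially. real (nat \<lfloor>\<beta> * real L\<rfloor>) / real L \<le> \<beta>"
    by (auto intro: eventually_mono[OF eventually_gt_at_top[of "0::nat"]])
qed simp

lemma tendsto_of_nat_diff_one_div:
  fixes n :: "nat \<Rightarrow> nat"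
  assumes "(\<lambda>L. real (n L) / real L) \<longlonglongrightarrow> c"
  shows "(\<lambda>L. real (n L - 1) / real L) \<longlonglongrightarrow> c"
proof (rule tendsto_sandwich)
  show "(\<lambda>L. real (n L) / real L - 1 / real L) \<longlonglongrightarrow> c"
    using tendsto_diff[OF assms lim_1_over_n] by simp
  have "real (n L) - 1 \<le> real (n L - 1)" "real (n L - 1) \<le> real (n L)" for L
    by linarith+
  then show "\<forall>\<^sub>F L in sequentially. real (n L) / real L - 1 / real L \<le> real (n L - 1) / real L"
    "\<forall>\<^sub>F L in sequentially. real (n L - 1) / real L \<le> real (n L) / real L"
    by (auto intro!: always_eventually divide_right_mono simp flip: diff_divide_distrib)
qed (rule assms)

lemma tendsto_affine_div_real:
  assumes "\<forall>\<^sub>F L in sequentially. f L = real L * c + d"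
  shows "(\<lambda>L. f L / real L) \<longlonglongrightarrow> c"
proof (rule Lim_transform_eventually)
  show "(\<lambda>L. c + d * (1 / real L)) \<longlonglongrightarrow> c"
    using tendsto_add[OF tendsto_const tendsto_mult[OF tendsto_const lim_1_over_n], of c d] by simp
  show "\<forall>\<^sub>F L in sequentially. c + d * (1 / real L) = f L / real L"
    using assms eventually_gt_at_top[of 0] by eventually_elim (simp add: field_simps)
qed

lemma tendsto_of_nat_add_floor_div:
  assumes "0 \<le> \<beta>"
  shows "(\<lambda>L. real (k * L + nat \<lfloor>\<beta> * real L\<rfloor>) / real L) \<longlonglongrightarrow> real k + \<beta>"
proof (rule Lim_transform_eventually)
  show "(\<lambda>L. real k + real (nat \<lfloor>\<beta> * real L\<rfloor>) / real L) \<longlonglongrightarrow> real k + \<beta>"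
    using assms by (intro tendsto_intros tendsto_nat_floor_mult_div)
  show "\<forall>\<^sub>F L in sequentially. real k + real (nat \<lfloor>\<beta> * real L\<rfloor>) / real L
      = real (k * L + nat \<lfloor>\<beta> * real L\<rfloor>) / real L"
    using eventually_gt_at_top[of 0] by eventually_elim (simp add: field_simps)
qed

lemma poisson_ln_lower_rate:
  fixes n :: "nat \<Rightarrow> nat" and \<mu> :: "nat \<Rightarrow> real"
  assumes n: "(\<lambda>L. real (n L) / real L) \<longlonglongrightarrow> c" and c: "0 < c"
    and \<mu>: "(\<lambda>L. \<mu> L / real L) \<longlonglongrightarrow> m" and m: "0 < m"
  shows "(\<lambda>L. poisson_ln_lower (n L) (\<mu> L) / real L) \<longlonglongrightarrow> - poisson_kl c m"
proof -
  have "(\<lambda>L. real (n L) / real L * ln ((\<mu> L / real L) / (real (n L) / real L)) + real (n L) / real L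
      - ln (real (n L)) / real L - 1 / real L - \<mu> L / real L) \<longlonglongrightarrow> c * ln (m / c) + c - 0 - 0 - m"
    by (intro tendsto_intros n \<mu> tendsto_ln_div_real[OF n c] lim_1_over_n) (use c m in auto)
  moreover have "c * ln (m / c) + c - 0 - 0 - m = - poisson_kl c m"
    using c m by (simp add: poisson_kl_def ln_div algebra_simps)
  moreover have "\<forall>\<^sub>F L in sequentially. real (n L) / real L * ln ((\<mu> L / real L) / (real (n L) / real L))
      + real (n L) / real L - ln (real (n L)) / real L - 1 / real L - \<mu> L / real L
      = poisson_ln_lower (n L) (\<mu> L) / real L"
    using eventually_gt_at_top[of 0]
    by eventually_elim (simp add: poisson_ln_lower_def field_simps)
  ultimately show ?thesis
    by (simp add: Lim_transform_eventually)
qed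

lemma poisson_ln_lower_floor_rate:
  assumes "0 \<le> \<beta>" "0 \<le> m" "\<beta> = 0 \<or> 0 < m"
  shows "(\<lambda>L. poisson_ln_lower (nat \<lfloor>\<beta> * real L\<rfloor>) (real L * m) / real L) \<longlonglongrightarrow> - poisson_kl \<beta> m"
proof (cases "\<beta> = 0")
  case True
  have "(\<lambda>L. - (1 / real L) - m) \<longlonglongrightarrow> - 0 - m"
    by (intro tendsto_intros lim_1_over_n)
  moreover have "\<forall>\<^sub>F L in sequentially. - (1 / real L) - m
      = poisson_ln_lower (nat \<lfloor>\<beta> * real L\<rfloor>) (real L * m) / real L"
    using eventually_gt_at_top[of 0]
    by eventually_elim (simp add: True poisson_ln_lower_def field_simps)
  ultimately show ?thesis
    using True by (simp add: poisson_kl_def Lim_transform_eventually)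
next
  case False
  with assms have "0 < \<beta>" "0 < m"
    by simp_all
  moreover have "(\<lambda>L. real L * m / real L) \<longlonglongrightarrow> m"
    by (rule tendsto_affine_div_real[where d = 0]) simp
  ultimately show ?thesis
    by (intro poisson_ln_lower_rate tendsto_nat_floor_mult_div) simp_all
qed

text \<open>
  The logarithm of the lower bound for the miss probability obtained from the Poisson index
  \<lfloor>\<beta>L\<rfloor>, the numerator box [2\<mu>L - 1, 2\<mu>L] and the denominator box [vL, vL + 1], uniformly for
  noncentralities L\<eta> with \<eta> \<in> [a, b].
\<close>

definition miss_exponent :: "nat \<Rightarrow> nat \<Rightarrow> real \<Rightarrow> real \<Rightarrow> real \<Rightarrow> real \<Rightarrow> real \<Rightarrow> nat \<Rightarrow> real" where
  "miss_exponent NR Ns a b \<beta> \<mu> v L =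
     - real L * (b - a) / 2 + poisson_ln_lower (nat \<lfloor>\<beta> * real L\<rfloor>) (real L * (a / 2))
     + poisson_ln_lower (NR * L + nat \<lfloor>\<beta> * real L\<rfloor> - 1) ((2 * \<mu> * real L - 1) / 2)
     + poisson_ln_lower (NR * L * (Ns - 1) - 1) (real L * v / 2) - (1 + 2 * ln 2)"

lemma exp_miss_exponent_le_p_miss:
  assumes NR: "1 \<le> NR" and Ns: "2 \<le> Ns" and L: "1 \<le> L" "1 < 2 * \<mu> * real L"
    and \<eta>: "0 \<le> a" "a \<le> \<eta>" "\<eta> \<le> b" and \<beta>: "\<beta> = 0 \<or> 0 < a" and v: "0 < v" "2 * \<mu> \<le> \<gamma> * v"
  shows "exp (miss_exponent NR Ns a b \<beta> \<mu> v L) \<le> p_miss NR Ns \<gamma> L \<eta>"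
proof -
  define j where "j = nat \<lfloor>\<beta> * real L\<rfloor>"
  define c1 c2 where "c1 = exp (poisson_ln_lower (NR * L + j - 1) ((2 * \<mu> * real L - 1) / 2) - 1 / 2) / 2"
    and "c2 = exp (poisson_ln_lower (NR * L * (Ns - 1) - 1) (real L * v / 2) - 1 / 2) / 2"
  have j: "0 < real L * (a / 2) \<or> j = 0"
    using \<beta> L by (auto simp: j_def)
  have half: "exp (x - 1 / 2 - ln 2) = exp (x - 1 / 2) / 2" for x :: real
    by (simp add: exp_diff)
  have "miss_exponent NR Ns a b \<beta> \<mu> v L = - (real L * b / 2 - real L * a / 2)
      + poisson_ln_lower j (real L * (a / 2))
      + (poisson_ln_lower (NR * L + j - 1) ((2 * \<mu> * real L - 1) / 2) - 1 / 2 - ln 2)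
      + (poisson_ln_lower (NR * L * (Ns - 1) - 1) (real L * v / 2) - 1 / 2 - ln 2)"
    by (simp add: miss_exponent_def j_def field_simps)
  then have "exp (miss_exponent NR Ns a b \<beta> \<mu> v L)
      = exp (- (real L * b / 2 - real L * a / 2)) * exp (poisson_ln_lower j (real L * (a / 2))) * c1 * c2"
    by (simp only: exp_add half c1_def c2_def)
  also have "\<dots> \<le> exp (- (real L * b / 2 - real L * a / 2)) * poisson_weight (real L * (a / 2)) j * c1 * c2"
    using exp_poisson_ln_lower_le[OF j] by (simp add: c1_def c2_def)
  also have "\<dots> \<le> poisson_weight (real L * \<eta> / 2) j * c1 * c2"
    using poisson_weight_ge_interval[of "real L * (a / 2)" "real L * \<eta> / 2" "real L * b / 2" j] \<eta>
    by (intro mult_right_mono) (simp_all add: mult_left_mono c1_def c2_def)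
  also have "\<dots> \<le> p_miss NR Ns \<gamma> L \<eta>"
    unfolding c1_def c2_def
    using NR Ns L v \<eta> mult_right_mono[OF v(2), of "real L"]
    by (intro p_miss_ge_box) (simp_all add: algebra_simps)
  finally show ?thesis .
qed

lemma miss_exponent_rate:
  assumes NR: "1 \<le> NR" and Ns: "2 \<le> Ns" and a: "0 \<le> a" and \<beta>: "0 \<le> \<beta>" "\<beta> = 0 \<or> 0 < a"
    and \<mu>: "0 < \<mu>" and v: "0 < v"
  shows "(\<lambda>L. miss_exponent NR Ns a b \<beta> \<mu> v L / real L) \<longlonglongrightarrow> - (b - a) / 2 - poisson_kl \<beta> (a / 2)
       - poisson_kl (real NR + \<beta>) \<mu> - poisson_kl (real NR * real (Ns - 1)) (v / 2)"
proof -
  define j where "j L = nat \<lfloor>\<beta> * real L\<rfloor>" for L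
  have "(\<lambda>L. real (NR * L + j L) / real L) \<longlonglongrightarrow> real NR + \<beta>"
    unfolding j_def using \<beta>(1) by (rule tendsto_of_nat_add_floor_div)
  moreover have "(\<lambda>L. (2 * \<mu> * real L - 1) / 2 / real L) \<longlonglongrightarrow> \<mu>"
    by (rule tendsto_affine_div_real[where d = "- 1 / 2"]) (simp add: field_simps)
  ultimately have rate1: "(\<lambda>L. poisson_ln_lower (NR * L + j L - 1) ((2 * \<mu> * real L - 1) / 2) / real L)
      \<longlonglongrightarrow> - poisson_kl (real NR + \<beta>) \<mu>"
    using NR \<beta> \<mu> by (intro poisson_ln_lower_rate tendsto_of_nat_diff_one_div) simp_all
  have "(\<lambda>L. real (NR * L * (Ns - 1)) / real L) \<longlonglongrightarrow> real NR * real (Ns - 1)"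
    "(\<lambda>L. real L * v / 2 / real L) \<longlonglongrightarrow> v / 2"
    by (rule tendsto_affine_div_real[where d = 0]; simp)+
  then have rate2: "(\<lambda>L. poisson_ln_lower (NR * L * (Ns - 1) - 1) (real L * v / 2) / real L)
      \<longlonglongrightarrow> - poisson_kl (real NR * real (Ns - 1)) (v / 2)"
    using NR Ns v by (intro poisson_ln_lower_rate tendsto_of_nat_diff_one_div) simp_all
  have rate0: "(\<lambda>L. poisson_ln_lower (j L) (real L * (a / 2)) / real L) \<longlonglongrightarrow> - poisson_kl \<beta> (a / 2)"
    unfolding j_def using \<beta> a by (intro poisson_ln_lower_floor_rate) auto
  have "(\<lambda>L. - (b - a) / 2 + poisson_ln_lower (j L) (real L * (a / 2)) / real L
      + poisson_ln_lower (NR * L + j L - 1) ((2 * \<mu> * real L - 1) / 2) / real L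
      + poisson_ln_lower (NR * L * (Ns - 1) - 1) (real L * v / 2) / real L - (1 + 2 * ln 2) * (1 / real L))
    \<longlonglongrightarrow> - (b - a) / 2 + - poisson_kl \<beta> (a / 2) + - poisson_kl (real NR + \<beta>) \<mu>
      + - poisson_kl (real NR * real (Ns - 1)) (v / 2) - (1 + 2 * ln 2) * 0"
    by (intro tendsto_intros rate0 rate1 rate2 lim_1_over_n)
  moreover have "\<forall>\<^sub>F L in sequentially. - (b - a) / 2 + poisson_ln_lower (j L) (real L * (a / 2)) / real L
      + poisson_ln_lower (NR * L + j L - 1) ((2 * \<mu> * real L - 1) / 2) / real L
      + poisson_ln_lower (NR * L * (Ns - 1) - 1) (real L * v / 2) / real L - (1 + 2 * ln 2) * (1 / real L)
    = miss_exponent NR Ns a b \<beta> \<mu> v L / real L"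
    using eventually_gt_at_top[of 0] by eventually_elim (simp add: miss_exponent_def j_def field_simps)
  ultimately show ?thesis
    by (auto dest: Lim_transform_eventually)
qed

lemma x_star_gt:
  fixes NR Ns :: nat and \<gamma> \<eta> xs :: real
  assumes \<gamma>: "0 < \<gamma>" and \<eta>: "0 < \<eta>" and xs: "0 < xs"
    and sol: "(\<gamma> + 1) / (\<eta> * \<gamma>) * (xs^2 - real NR ^ 2) - xs - real NR - 2 * real NR * real (Ns - 1) = 0"
  shows "real NR < xs" "0 < (xs^2 - real NR ^ 2) / (\<eta> * \<gamma>)"
proof -
  show xr: "real NR < xs"
  proof (rule ccontr)
    assume "\<not> real NR < xs"
    then have "xs ^ 2 - real NR ^ 2 \<le> 0"
      using xs by (simp add: power_mono)
    then have "(\<gamma> + 1) / (\<eta> * \<gamma>) * (xs^2 - real NR ^ 2) \<le> 0"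
      using \<gamma> \<eta> by (intro mult_nonneg_nonpos) simp_all
    moreover have "0 \<le> 2 * real NR * real (Ns - 1)"
      by simp
    ultimately show False
      using sol xs by linarith
  qed
  then have "0 < xs^2 - real NR ^ 2"
    by (simp add: power_strict_mono)
  then show "0 < (xs^2 - real NR ^ 2) / (\<eta> * \<gamma>)"
    using \<gamma> \<eta> by simp
qed

lemma I_star_eq:
  fixes NR Ns :: nat and \<gamma> \<eta> xs :: real
  assumes \<gamma>: "0 < \<gamma>" and \<eta>: "0 < \<eta>" and xs: "0 < xs"
  defines "v \<equiv> (xs^2 - real NR ^ 2) / (\<eta> * \<gamma>)"
  shows "I_star NR Ns \<eta> \<gamma> xs = \<eta> / 2 * (1 - (xs - real NR) / \<eta>)
    + real NR * real (Ns - 1) * ln (2 * (real NR * real (Ns - 1)) / v) - real NR * ln ((xs - real NR) / \<eta>)"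
proof -
  define r where "r = real NR"
  have sqrt: "sqrt (r ^ 2 + \<gamma> * \<eta> * v) = xs"
    using xs \<gamma> \<eta> by (simp add: v_def r_def)
  have "\<gamma> * v = (xs - r) * (xs + r) / \<eta>"
    using \<gamma> \<eta> by (simp add: v_def r_def power2_eq_square field_simps)
  then have q: "\<gamma> * v / (r + xs) = (xs - r) / \<eta>"
    using xs \<eta> by (simp add: r_def field_simps)
  have "I_star NR Ns \<eta> \<gamma> xs = \<eta> / 2 * (1 - \<gamma> * v / (r + sqrt (r ^ 2 + \<gamma> * \<eta> * v)))
      + r * real (Ns - 1) * ln (2 * r * real (Ns - 1) / v) - r * ln (\<gamma> * v / (r + sqrt (r ^ 2 + \<gamma> * \<eta> * v)))"
    unfolding I_star_def Let_def r_def v_def ..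
  then show ?thesis
    unfolding sqrt q by (simp add: r_def mult.assoc)
qed

text \<open>
  I* is the exponent of the box event for \<beta> = (x* - N_R)/2, \<mu> = \<gamma>v*/2 and v = v*, with the
  Poisson intensity at its largest value \<eta>-/2.
\<close>

lemma I_star_eq_poisson_kl:
  fixes NR Ns :: nat and \<gamma> \<eta> xs :: real
  assumes \<gamma>: "0 < \<gamma>" and \<eta>: "0 < \<eta>" and xs: "0 < xs"
    and sol: "(\<gamma> + 1) / (\<eta> * \<gamma>) * (xs^2 - real NR ^ 2) - xs - real NR - 2 * real NR * real (Ns - 1) = 0"
  defines "v \<equiv> (xs^2 - real NR ^ 2) / (\<eta> * \<gamma>)"
  shows "I_star NR Ns \<eta> \<gamma> xs = poisson_kl ((xs - real NR) / 2) (\<eta> / 2)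
       + poisson_kl ((xs + real NR) / 2) (\<gamma> * v / 2) + poisson_kl (real NR * real (Ns - 1)) (v / 2)"
proof -
  define r M where "r = real NR" and "M = real NR * real (Ns - 1)"
  note xr = x_star_gt(1)[OF \<gamma> \<eta> xs sol]
  have v_sol: "(\<gamma> + 1) * v = xs + r + 2 * M"
    using sol \<gamma> \<eta> by (simp add: v_def r_def M_def field_simps)
  define q where "q = (xs - r) / \<eta>"
  have \<eta>q: "\<eta> * q = xs - r"
    using \<eta> by (simp add: q_def)
  have q: "0 < q"
    using xr \<eta> by (simp add: q_def r_def)
  have q_eq: "\<gamma> * v / 2 = (xs + r) / 2 * q"
    using \<gamma> \<eta> by (simp add: v_def q_def r_def power2_eq_square field_simps)
  have I: "I_star NR Ns \<eta> \<gamma> xs = \<eta> / 2 * (1 - q) + M * ln (2 * M / v) - r * ln q"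
    unfolding I_star_eq[OF \<gamma> \<eta> xs, of NR Ns, folded v_def] by (simp add: q_def r_def M_def)
  have kl1: "poisson_kl ((xs - r) / 2) (\<eta> / 2) = (xs - r) / 2 * ln q - (xs - r) / 2 + \<eta> / 2"
  proof -
    have "(xs - r) / 2 / (\<eta> / 2) = q"
      using \<eta> by (simp add: q_def field_simps)
    then show ?thesis
      by (simp add: poisson_kl_def)
  qed
  have "(xs + r) / 2 / (\<gamma> * v / 2) = inverse q"
  proof -
    have "c / (c * q) = inverse q" if "c \<noteq> 0" for c
      using that by (simp add: field_simps)
    moreover have "(xs + r) / 2 \<noteq> 0"
      using xs by (simp add: r_def)
    ultimately show ?thesis
      unfolding q_eq by blast
  qed
  then have kl2: "poisson_kl ((xs + r) / 2) (\<gamma> * v / 2) = - ((xs + r) / 2 * ln q) - (xs + r) / 2 + \<gamma> * v / 2"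
    using q by (simp add: poisson_kl_def ln_inverse)
  have kl3: "poisson_kl M (v / 2) = M * ln (2 * M / v) - M + v / 2"
    by (simp add: poisson_kl_def mult.commute)
  show ?thesis
    unfolding I M_def[symmetric] unfolding r_def[symmetric] kl1 kl2 kl3
    using \<eta>q v_sol by (simp add: field_simps)
qed

section \<open>Averaging over directions\<close>

lemma p_miss_avg_ge:
  assumes NR: "1 \<le> NR" and Ns: "2 \<le> Ns" and L: "1 \<le> L"
    and p_int: "set_integrable lborel \<Omega> p" and p_nonneg: "\<forall>\<phi>\<in>\<Omega>. 0 \<le> p \<phi>"
    and eta_nonneg: "\<forall>\<phi>\<in>\<Omega>. 0 \<le> \<eta> \<phi>"
    and S: "S \<subseteq> \<Omega>" "S \<in> sets lborel"
    and c: "0 \<le> c" "\<forall>\<phi>\<in>S. c \<le> p_miss NR Ns \<gamma> L (\<eta> \<phi>)"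
  shows "c * (LINT \<phi>:S|lborel. p \<phi>) \<le> p_miss_avg NR Ns \<gamma> L \<Omega> p \<eta>"
proof -
  let ?avg = "\<integral>\<^sup>+\<phi>. ennreal (p_miss NR Ns \<gamma> L (\<eta> \<phi>) * p \<phi>) * indicator \<Omega> \<phi> \<partial>lborel"
  have "integrable lborel (\<lambda>\<phi>. c * (indicator S \<phi> *\<^sub>R p \<phi>))"
    using set_integrable_subset[OF p_int S(2,1)] unfolding set_integrable_def by simp
  then have "ennreal (c * (LINT \<phi>:S|lborel. p \<phi>)) = (\<integral>\<^sup>+\<phi>. ennreal (c * (indicator S \<phi> *\<^sub>R p \<phi>)) \<partial>lborel)"
    unfolding set_lebesgue_integral_def
    using S p_nonneg c by (subst nn_integral_eq_integral) (auto intro!: AE_I2 simp: indicator_def)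
  also have "\<dots> \<le> ?avg"
    using S p_nonneg c
    by (intro nn_integral_mono) (auto simp: indicator_def ennreal_leI mult_right_mono)
  finally have lower: "ennreal (c * (LINT \<phi>:S|lborel. p \<phi>)) \<le> ?avg" .
  have "?avg \<le> (\<integral>\<^sup>+\<phi>. ennreal (indicator \<Omega> \<phi> *\<^sub>R p \<phi>) \<partial>lborel)"
    using p_miss_le_1[OF NR Ns L] p_nonneg eta_nonneg measure_nonneg[of _ "{..real (Ns - 1) * \<gamma>}"]
    unfolding p_miss_def by (intro nn_integral_mono) (auto simp: indicator_def ennreal_leI mult_left_le_one_le)
  also have "\<dots> < \<infinity>"
    using integrableD(2)[OF p_int[unfolded set_integrable_def]] by (simp add: less_top)
  finally have "enn2real (ennreal (c * (LINT \<phi>:S|lborel. p \<phi>))) \<le> enn2real ?avg"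
    using lower by (intro enn2real_mono) simp_all
  moreover have "0 \<le> (LINT \<phi>:S|lborel. p \<phi>)"
    unfolding set_lebesgue_integral_def using S p_nonneg
    by (intro Bochner_Integration.integral_nonneg) (auto simp: indicator_def)
  ultimately show ?thesis
    using c by (simp add: p_miss_avg_def)
qed

lemma limsup_neg_ln_div_le:
  fixes f E :: "nat \<Rightarrow> real"
  assumes E: "(\<lambda>L. E L / real L) \<longlonglongrightarrow> T" and q: "0 < q"
    and f: "\<forall>\<^sub>F L in sequentially. exp (E L) * q \<le> f L"
  shows "limsup (\<lambda>L. ereal (- (1 / real L) * ln (f L))) \<le> ereal (- T)"
proof -
  have "\<forall>\<^sub>F L in sequentially. - (1 / real L) * ln (f L) \<le> - (E L / real L) - ln q * (1 / real L)"
    using f eventually_gt_at_top[of 0]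
  proof eventually_elim
    case (elim L)
    then have "exp (E L + ln q) \<le> f L"
      using q by (simp add: exp_add)
    then have "E L + ln q \<le> ln (f L)"
      by (simp add: ln_ge_iff order.strict_trans2[OF exp_gt_zero])
    with elim show ?case
      by (simp add: field_simps)
  qed
  then have "limsup (\<lambda>L. ereal (- (1 / real L) * ln (f L)))
      \<le> limsup (\<lambda>L. ereal (- (E L / real L) - ln q * (1 / real L)))"
    by (intro Limsup_mono) simp
  also have "\<dots> = ereal (- T - ln q * 0)"
    by (intro lim_imp_Limsup tendsto_ereal tendsto_intros E lim_1_over_n) simp
  finally show ?thesis
    by simp
qed

lemma limsup_neg_ln_p_miss_avg_le_kl:
  fixes NR Ns :: nat and \<gamma> a b \<beta> \<mu> v :: real
  assumes NR: "1 \<le> NR" and Ns: "2 \<le> Ns" and ab: "0 \<le> a" "a \<le> b"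
    and \<beta>: "0 \<le> \<beta>" "\<beta> = 0 \<or> 0 < a" and \<mu>: "0 < \<mu>" and v: "0 < v" "2 * \<mu> \<le> \<gamma> * v"
    and p_int: "set_integrable lborel \<Omega> p" and p_nonneg: "\<forall>\<phi>\<in>\<Omega>. 0 \<le> p \<phi>"
    and eta_nonneg: "\<forall>\<phi>\<in>\<Omega>. 0 \<le> \<eta> \<phi>"
    and S: "S \<subseteq> \<Omega>" "S \<in> sets lborel" "\<forall>\<phi>\<in>S. a \<le> \<eta> \<phi> \<and> \<eta> \<phi> \<le> b"
      "0 < (LINT \<phi>:S|lborel. p \<phi>)"
  shows "limsup (\<lambda>L. ereal (- (1 / real L) * ln (p_miss_avg NR Ns \<gamma> L \<Omega> p \<eta>)))
           \<le> ereal ((b - a) / 2 + poisson_kl \<beta> (a / 2) + poisson_kl (real NR + \<beta>) \<mu>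
               + poisson_kl (real NR * real (Ns - 1)) (v / 2))"
proof -
  obtain N where N: "1 / (2 * \<mu>) < real N"
    using reals_Archimedean2 by blast
  have "\<forall>\<^sub>F L in sequentially. exp (miss_exponent NR Ns a b \<beta> \<mu> v L) * (LINT \<phi>:S|lborel. p \<phi>)
      \<le> p_miss_avg NR Ns \<gamma> L \<Omega> p \<eta>"
    using eventually_ge_at_top[of "Suc N"]
  proof eventually_elim
    case (elim L)
    then have "1 < 2 * \<mu> * real L"
      using N \<mu> by (simp add: pos_divide_less_eq mult.commute less_le_trans)
    with elim show ?case
      using NR Ns p_int p_nonneg eta_nonneg S ab \<beta>(2) v
      by (intro p_miss_avg_ge ballI exp_miss_exponent_le_p_miss) auto
  qed
  then have "limsup (\<lambda>L. ereal (- (1 / real L) * ln (p_miss_avg NR Ns \<gamma> L \<Omega> p \<eta>)))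
      \<le> ereal (- (- (b - a) / 2 - poisson_kl \<beta> (a / 2) - poisson_kl (real NR + \<beta>) \<mu>
               - poisson_kl (real NR * real (Ns - 1)) (v / 2)))"
    by (rule limsup_neg_ln_div_le[OF miss_exponent_rate[OF NR Ns ab(1) \<beta> \<mu> v(1)] S(4)])
  moreover have "- (- (b - a) / 2 - poisson_kl \<beta> (a / 2) - poisson_kl (real NR + \<beta>) \<mu>
      - poisson_kl (real NR * real (Ns - 1)) (v / 2)) = (b - a) / 2 + poisson_kl \<beta> (a / 2)
      + poisson_kl (real NR + \<beta>) \<mu> + poisson_kl (real NR * real (Ns - 1)) (v / 2)"
    by (simp add: field_simps)
  ultimately show ?thesis
    by (simp only:)
qed

lemma limsup_neg_ln_p_miss_avg_le:
  fixes NR Ns :: nat and \<gamma> \<eta>m xs a b :: real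
  assumes NR: "1 \<le> NR" and Ns: "2 \<le> Ns" and \<gamma>: "0 < \<gamma>" and \<eta>m: "0 < \<eta>m" and xs: "0 < xs"
    and sol: "(\<gamma> + 1) / (\<eta>m * \<gamma>) * (xs^2 - real NR ^ 2) - xs - real NR - 2 * real NR * real (Ns - 1) = 0"
    and ab: "0 \<le> a" "a \<le> b" "b \<le> \<eta>m"
    and p_int: "set_integrable lborel \<Omega> p" and p_nonneg: "\<forall>\<phi>\<in>\<Omega>. 0 \<le> p \<phi>"
    and eta_nonneg: "\<forall>\<phi>\<in>\<Omega>. 0 \<le> \<eta> \<phi>"
    and S: "S \<subseteq> \<Omega>" "S \<in> sets lborel" "\<forall>\<phi>\<in>S. a \<le> \<eta> \<phi> \<and> \<eta> \<phi> \<le> b"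
      "0 < (LINT \<phi>:S|lborel. p \<phi>)"
  shows "limsup (\<lambda>L. ereal (- (1 / real L) * ln (p_miss_avg NR Ns \<gamma> L \<Omega> p \<eta>)))
           \<le> ereal (I_star NR Ns \<eta>m \<gamma> xs + (b - a) / 2)"
proof -
  define v where "v = (xs^2 - real NR ^ 2) / (\<eta>m * \<gamma>)"
  note I = x_star_gt[OF \<gamma> \<eta>m xs sol, folded v_def] I_star_eq_poisson_kl[OF \<gamma> \<eta>m xs sol, folded v_def]
  define \<beta>s where "\<beta>s = (xs - real NR) / 2"
  \<comment> \<open>Capping at the Poisson means a/2 and N_R + \<beta> only lowers the relative entropies.\<close>
  define \<beta> where "\<beta> = min \<beta>s (a / 2)"
  define \<mu> where "\<mu> = min (\<gamma> * v / 2) (real NR + \<beta>)"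
  have \<beta>s: "0 < \<beta>s"
    using I(1) by (simp add: \<beta>s_def)
  have \<beta>: "0 \<le> \<beta>" "\<beta> = 0 \<or> 0 < a" "\<beta> \<le> \<beta>s"
    using \<beta>s ab by (auto simp: \<beta>_def)
  have \<mu>: "0 < \<mu>" "2 * \<mu> \<le> \<gamma> * v"
    using I(2) \<gamma> \<beta>(1) NR by (simp_all add: \<mu>_def min_def)
  have "poisson_kl \<beta> (a / 2) \<le> poisson_kl \<beta>s (\<eta>m / 2)"
    unfolding \<beta>_def using \<beta>s ab \<eta>m by (intro poisson_kl_min_left_le) simp_all
  moreover have "poisson_kl (real NR + \<beta>) \<mu> \<le> poisson_kl (real NR + \<beta>s) (\<gamma> * v / 2)"
    unfolding \<mu>_def using I(2) \<gamma> \<beta> by (intro poisson_kl_min_right_le) simp_all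
  moreover have h: "(xs + real NR) / 2 = real NR + \<beta>s"
    by (simp add: \<beta>s_def field_simps)
  ultimately have "(b - a) / 2 + poisson_kl \<beta> (a / 2) + poisson_kl (real NR + \<beta>) \<mu>
      + poisson_kl (real NR * real (Ns - 1)) (v / 2) \<le> I_star NR Ns \<eta>m \<gamma> xs + (b - a) / 2"
    unfolding I(3) \<beta>s_def[symmetric] h by linarith
  moreover have "limsup (\<lambda>L. ereal (- (1 / real L) * ln (p_miss_avg NR Ns \<gamma> L \<Omega> p \<eta>)))
      \<le> ereal ((b - a) / 2 + poisson_kl \<beta> (a / 2) + poisson_kl (real NR + \<beta>) \<mu>
               + poisson_kl (real NR * real (Ns - 1)) (v / 2))"
    using I(2) by (intro limsup_neg_ln_p_miss_avg_le_kl[OF NR Ns ab(1,2) \<beta>(1,2) \<mu>(1) _ \<mu>(2)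
          p_int p_nonneg eta_nonneg S])
  ultimately show ?thesis
    by (simp add: order_trans)
qed

lemma exists_grid_cell:
  fixes c t :: real and N :: nat
  assumes "0 < c" "0 \<le> t" "t \<le> c" "0 < N"
  shows "\<exists>i<N. real i * c / real N \<le> t \<and> t \<le> real (Suc i) * c / real N"
proof -
  define s where "s = t * real N / c"
  define i where "i = min (N - 1) (nat \<lfloor>s\<rfloor>)"
  have s: "0 \<le> s" "s \<le> real N"
    using assms by (simp_all add: s_def field_simps)
  have "real i \<le> s"
    using s by (simp add: i_def min_def of_nat_nat) linarith
  moreover have "s \<le> real (Suc i)"
    using s assms(4) by (simp add: i_def min_def of_nat_nat of_nat_diff) linarith
  moreover have "i < N"
    using assms(4) by (simp add: i_def)
  ultimately show ?thesis
    using assms by (auto simp: s_def field_simps)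
qed

lemma set_integral_le_sum_cover:
  fixes p :: "'a \<Rightarrow> real"
  assumes p: "set_integrable M A p" "\<forall>x\<in>A. 0 \<le> p x"
    and C: "finite I" "\<And>i. i \<in> I \<Longrightarrow> C i \<in> sets M" "\<And>i. i \<in> I \<Longrightarrow> C i \<subseteq> A"
    and cover: "A \<subseteq> (\<Union>i\<in>I. C i)"
  shows "(LINT x:A|M. p x) \<le> (\<Sum>i\<in>I. LINT x:C i|M. p x)"
proof -
  have int: "integrable M (\<lambda>x. indicator (C i) x *\<^sub>R p x)" if "i \<in> I" for i
    using set_integrable_subset[OF p(1) C(2,3)[OF that]] by (simp add: set_integrable_def)
  have "(LINT x:A|M. p x) \<le> integral\<^sup>L M (\<lambda>x. \<Sum>i\<in>I. indicator (C i) x *\<^sub>R p x)"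
    unfolding set_lebesgue_integral_def
  proof (rule integral_mono)
    show "integrable M (\<lambda>x. indicator A x *\<^sub>R p x)"
      using p(1) by (simp add: set_integrable_def)
    show "integrable M (\<lambda>x. \<Sum>i\<in>I. indicator (C i) x *\<^sub>R p x)"
      by (rule Bochner_Integration.integrable_sum[where f = "\<lambda>i x. indicator (C i) x *\<^sub>R p x"])
         (rule int)
    fix x
    show "indicator A x *\<^sub>R p x \<le> (\<Sum>i\<in>I. indicator (C i) x *\<^sub>R p x)"
    proof (cases "x \<in> A")
      case True
      then obtain i where i: "i \<in> I" "x \<in> C i"
        using cover by blast
      then have "indicator A x *\<^sub>R p x = indicator (C i) x *\<^sub>R p x"
        using True by simp
      also have "\<dots> \<le> (\<Sum>i\<in>I. indicator (C i) x *\<^sub>R p x)"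
        using i C(1,3) p(2) by (intro member_le_sum) (auto simp: indicator_def)
      finally show ?thesis .
    next
      case False
      then have "x \<notin> C i" if "i \<in> I" for i
        using C(3)[OF that] by blast
      with False show ?thesis
        by (simp add: indicator_def)
    qed
  qed
  also have "\<dots> = (\<Sum>i\<in>I. LINT x:C i|M. p x)"
    unfolding set_lebesgue_integral_def
    by (rule Bochner_Integration.integral_sum[where f = "\<lambda>i x. indicator (C i) x *\<^sub>R p x"])
       (rule int)
  finally show ?thesis .
qed

lemma exists_cell_pos_set_integral:
  fixes A :: "real set" and f p :: "real \<Rightarrow> real" and c :: real and N :: nat
  assumes A: "A \<in> sets lborel" and f: "f \<in> borel_measurable lborel"
    and f_range: "\<forall>x\<in>A. 0 \<le> f x \<and> f x \<le> c" and c: "0 < c"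
    and p: "set_integrable lborel A p" "\<forall>x\<in>A. 0 \<le> p x" "0 < (LINT x:A|lborel. p x)"
    and N: "0 < N"
  obtains i where "i < N" "A \<inter> f -` {real i * c / N .. real (Suc i) * c / N} \<in> sets lborel"
    "0 < (LINT x:(A \<inter> f -` {real i * c / N .. real (Suc i) * c / N})|lborel. p x)"
proof -
  define C where "C i = A \<inter> f -` {real i * c / N .. real (Suc i) * c / N}" for i
  have C: "C i \<in> sets lborel" for i
    using A measurable_sets[OF f, of "{real i * c / N .. real (Suc i) * c / N}"] by (auto simp: C_def)
  have "A \<subseteq> (\<Union>i\<in>{..<N}. C i)"
    using exists_grid_cell[OF c _ _ N] f_range by (fastforce simp: C_def)
  then have "0 < (\<Sum>i<N. LINT x:C i|lborel. p x)"
    using set_integral_le_sum_cover[OF p(1,2) _ C, of "{..<N}"] p(3) by (force simp: C_def)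
  then obtain i where "i < N" "0 < (LINT x:C i|lborel. p x)"
    by (metis (no_types, lifting) lessThan_iff not_le sum_nonpos)
  then show ?thesis
    using that C by (simp add: C_def)
qed

lemma ereal_le_of_le_add_div:
  fixes x :: ereal and c d :: real
  assumes "\<And>N. 0 < N \<Longrightarrow> x \<le> ereal (c + d / real N)"
  shows "x \<le> ereal c"
proof (rule tendsto_le[OF trivial_limit_sequentially])
  show "(\<lambda>N. ereal (c + d / real N)) \<longlonglongrightarrow> ereal c"
    using tendsto_add[OF tendsto_const tendsto_mult[OF tendsto_const lim_1_over_n], of c d]
    by (intro tendsto_ereal) simp
  show "\<forall>\<^sub>F N in sequentially. x \<le> ereal (c + d / real N)"
    using eventually_gt_at_top[of 0] by (rule eventually_mono) (rule assms)
qed simp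

lemma limsup_neg_ln_p_miss_avg_le_grid:
  fixes NR Ns :: nat and \<gamma> \<eta>m xs :: real and N :: nat
  assumes NR: "1 \<le> NR" and Ns: "2 \<le> Ns" and \<gamma>: "0 < \<gamma>" and \<eta>m: "0 < \<eta>m" and xs: "0 < xs"
    and sol: "(\<gamma> + 1) / (\<eta>m * \<gamma>) * (xs^2 - real NR ^ 2) - xs - real NR - 2 * real NR * real (Ns - 1) = 0"
    and p_int: "set_integrable lborel \<Omega> p" and p_nonneg: "\<forall>\<phi>\<in>\<Omega>. 0 \<le> p \<phi>"
    and eta_meas: "set_borel_measurable lborel \<Omega> \<eta>" and eta_pos: "\<forall>\<phi>\<in>\<Omega>. 0 < \<eta> \<phi>"
    and Om: "\<Omega>m \<subseteq> \<Omega>" "\<Omega>m \<in> sets lborel" "\<forall>\<phi>\<in>\<Omega>m. \<eta> \<phi> \<le> \<eta>m" "0 < (LINT \<phi>:\<Omega>m|lborel. p \<phi>)"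
    and N: "0 < N"
  shows "limsup (\<lambda>L. ereal (- (1 / real L) * ln (p_miss_avg NR Ns \<gamma> L \<Omega> p \<eta>)))
           \<le> ereal (I_star NR Ns \<eta>m \<gamma> xs + \<eta>m / 2 / real N)"
proof -
  let ?g = "\<lambda>\<phi>. indicator \<Omega> \<phi> *\<^sub>R \<eta> \<phi>"
  have g: "?g \<in> borel_measurable lborel" "\<forall>\<phi>\<in>\<Omega>m. 0 \<le> ?g \<phi> \<and> ?g \<phi> \<le> \<eta>m"
    using eta_meas eta_pos Om by (auto simp: set_borel_measurable_def less_imp_le subset_iff)
  obtain i where i: "i < N"
    and C: "\<Omega>m \<inter> ?g -` {real i * \<eta>m / N .. real (Suc i) * \<eta>m / N} \<in> sets lborel"
      "0 < (LINT \<phi>:(\<Omega>m \<inter> ?g -` {real i * \<eta>m / N .. real (Suc i) * \<eta>m / N})|lborel. p \<phi>)"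
    using exists_cell_pos_set_integral[OF Om(2) g \<eta>m set_integrable_subset[OF p_int Om(2,1)] _ Om(4) N]
      p_nonneg Om(1) by blast
  have "real (Suc i) * \<eta>m / N \<le> \<eta>m"
    using i \<eta>m by (simp add: divide_le_eq mult_right_mono)
  then have "limsup (\<lambda>L. ereal (- (1 / real L) * ln (p_miss_avg NR Ns \<gamma> L \<Omega> p \<eta>)))
      \<le> ereal (I_star NR Ns \<eta>m \<gamma> xs + (real (Suc i) * \<eta>m / N - real i * \<eta>m / N) / 2)"
    using \<eta>m C eta_pos p_nonneg Om(1)
    by (intro limsup_neg_ln_p_miss_avg_le[OF NR Ns \<gamma> \<eta>m xs sol _ _ _ p_int])
       (auto simp: divide_right_mono less_imp_le subset_iff)
  moreover have "(real (Suc i) * \<eta>m / N - real i * \<eta>m / N) / 2 = \<eta>m / 2 / real N"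
    by (simp add: diff_divide_distrib[symmetric] algebra_simps)
  ultimately show ?thesis
    by (simp add: mult.commute)
qed

theorem proposition4:
  fixes NR Ns :: nat and \<gamma> :: real and \<Omega> \<Omega>m :: "real set"
    and p \<eta> :: "real \<Rightarrow> real" and \<eta>m xs :: real
  assumes NR: "NR \<ge> 1" and Ns: "Ns \<ge> 2" and gamma: "\<gamma> > 0"
    and Omega: "is_interval \<Omega>"
    and p_meas: "set_borel_measurable lborel \<Omega> p"
    and p_nonneg: "\<forall>\<phi>\<in>\<Omega>. p \<phi> \<ge> 0"
    and p_int: "set_integrable lborel \<Omega> p"
    and p_one: "(LINT \<phi>:\<Omega>|lborel. p \<phi>) = 1"
    and eta_meas: "set_borel_measurable lborel \<Omega> \<eta>"
    and eta_pos: "\<forall>\<phi>\<in>\<Omega>. \<eta> \<phi> > 0"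
    and Om_sub: "\<Omega>m \<subseteq> \<Omega>" and Om_meas: "\<Omega>m \<in> sets lborel"
    and etam_pos: "\<eta>m > 0"
    and eta_le: "\<forall>\<phi>\<in>\<Omega>m. \<eta> \<phi> \<le> \<eta>m"
    and Om_prob: "(LINT \<phi>:\<Omega>m|lborel. p \<phi>) > 0"
    and xs_pos: "xs > 0"
    and xs_sol: "(\<gamma> + 1) / (\<eta>m * \<gamma>) * (xs^2 - real NR ^ 2) - xs - real NR
                   - 2 * real NR * real (Ns - 1) = 0"
    and gamma_small: "\<gamma> < (2 * real NR + \<eta>m) / (2 * real NR * real (Ns - 1))"
  shows "limsup (\<lambda>L. ereal (- (1 / real L) * ln (p_miss_avg NR Ns \<gamma> L \<Omega> p \<eta>)))
           \<le> ereal (I_star NR Ns \<eta>m \<gamma> xs)"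
proof (rule ereal_le_of_le_add_div)
  fix N :: nat
  assume "0 < N"
  with assms show "limsup (\<lambda>L. ereal (- (1 / real L) * ln (p_miss_avg NR Ns \<gamma> L \<Omega> p \<eta>)))
      \<le> ereal (I_star NR Ns \<eta>m \<gamma> xs + \<eta>m / 2 / real N)"
    by (intro limsup_neg_ln_p_miss_avg_le_grid) auto
qed

end
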